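(* Let $\mathcal L$ be a finite atomic lattice with set of atoms $\mathfrak A(\mathcal L)$, and let $\mathcal G$ be a building set in $\mathcal L$. Let $\mathcal I\subseteq \mathbb Z[\{x_G\}_{G\in\mathcal G}]$ be the ideal generated by the monomials $\prod_{i=1}^t x_{G_i}$ for all subsets $\{G_1,\dots,G_t\}\subseteq\mathcal G$ that are not nested, together with the linear forms $\sum_{G\in\mathcal G,\,G\geq H} x_G$ for all atoms $H\in\mathfrak A(\mathcal L)$. Then $\mathcal I$ is also generated by the following polynomials: (a) $h_{\mathcal S}=\prod_{G\in\mathcal S}x_G$ for every subset $\mathcal S\subseteq\mathcal G$ that is not nested; (b) $g_{\mathcal H,B}=\prod_{i=1}^k x_{A_i}\,\Big(\sum_{G\in\mathcal G,\,G\geq B}x_G\Big)^{d}$, where $\mathcal H$ is a nested set, $A_1,\dots,A_k$ are the maximal elements of $\mathcal H$, $B\in\mathcal G$ with $B>A:=\bigvee_{i=1}^kA_i$ (the join of the empty set being $\hat 0$), and $d=d(A,B)$.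
   Context: A lattice is a finite poset in which every subset has a join $\vee$ and a meet $\wedge$; $\hat 0$ is its least element. It is atomic if every element is a join of atoms. For $X\le Y$ write $[X,Y]=\{Z: X\le Z\le Y\}$ and for $\mathcal G\subseteq\mathcal L$ write $\mathcal G_{\le X}=\{G\in\mathcal G: G\le X\}$. A subset $\mathcal G\subseteq\mathcal L\setminus\{\hat 0\}$ is a building set if for every $X\in\mathcal L\setminus\{\hat0\}$, with $\{G_1,\dots,G_k\}$ the set of maximal elements of $\mathcal G_{\le X}$, there is a poset isomorphism $\varphi_X:\prod_{i=1}^k[\hat0,G_i]\to[\hat0,X]$ with $\varphi_X(\hat0,\dots,G_i,\dots,\hat0)=G_i$ for all $i$. A subset $\mathcal S\subseteq\mathcal G$ is nested if for every set of pairwise incomparable elements $G_1,\dots,G_t\in\mathcal S$ with $t\ge2$, the join $G_1\vee\dots\vee G_t$ does not belong to $\mathcal G$. For $X\le Y$ in an atomic lattice, $d(X,Y)$ is the minimal number $d$ of atoms $H_1,\dots,H_d$ such that $Y=X\vee\bigvee_{i=1}^dH_i$. *)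

theory Defs
  imports "HOL-Library.Poly_Mapping"
begin

text \<open>The finite lattice is a type of class finite + complete_lattice (every finite
nonempty lattice is complete); bot is the least element.\<close>

definition atoms :: "'a::{finite,complete_lattice} set" where
  "atoms = {H. bot < H \<and> (\<forall>Z. bot < Z \<and> Z \<le> H \<longrightarrow> Z = H)}"

definition atomic_lattice :: "'a::{finite,complete_lattice} itself \<Rightarrow> bool" where
  "atomic_lattice _ \<longleftrightarrow> (\<forall>X::'a. X = Sup {H \<in> atoms. H \<le> X})"

definition maximals :: "'a::order set \<Rightarrow> 'a set" where
  "maximals S = {G \<in> S. \<not> (\<exists>G'\<in>S. G < G')}"

text \<open>Product of intervals [bot,G], G in M, modelled as functions on M (bot outside M),
ordered componentwise.\<close>
definition interval_product :: "'a::{finite,complete_lattice} set \<Rightarrow> ('a \<Rightarrow> 'a) set" where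
  "interval_product M = {f. (\<forall>G\<in>M. f G \<le> G) \<and> (\<forall>G. G \<notin> M \<longrightarrow> f G = bot)}"

definition building_set :: "'a::{finite,complete_lattice} set \<Rightarrow> bool" where
  "building_set \<G> \<longleftrightarrow> \<G> \<subseteq> - {bot} \<and>
     (\<forall>X. X \<noteq> bot \<longrightarrow>
       (let M = maximals {G \<in> \<G>. G \<le> X} in
        \<exists>\<phi>. bij_betw \<phi> (interval_product M) {Z. Z \<le> X} \<and>
            (\<forall>f\<in>interval_product M. \<forall>g\<in>interval_product M.
                 (\<phi> f \<le> \<phi> g) \<longleftrightarrow> (\<forall>G\<in>M. f G \<le> g G)) \<and>
            (\<forall>G\<in>M. \<phi> (\<lambda>H. if H = G then G else bot) = G)))"

definition nested :: "'a::{finite,complete_lattice} set \<Rightarrow> 'a set \<Rightarrow> bool" where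
  "nested \<G> S \<longleftrightarrow> S \<subseteq> \<G> \<and>
     (\<forall>T \<subseteq> S. card T \<ge> 2 \<and> (\<forall>x\<in>T. \<forall>y\<in>T. x \<le> y \<longrightarrow> x = y) \<longrightarrow> Sup T \<notin> \<G>)"

definition dist_atoms :: "'a::{finite,complete_lattice} \<Rightarrow> 'a \<Rightarrow> nat" where
  "dist_atoms X Y = (LEAST d. \<exists>Hs. Hs \<subseteq> atoms \<and> card Hs = d \<and> Y = sup X (Sup Hs))"

type_synonym 'a zpoly = "('a \<Rightarrow>\<^sub>0 nat) \<Rightarrow>\<^sub>0 int"

definition var :: "'a \<Rightarrow> 'a zpoly" where
  "var G = Poly_Mapping.single (Poly_Mapping.single G 1) 1"

definition ideal_generated :: "'r::comm_ring_1 set \<Rightarrow> 'r set" where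
  "ideal_generated S = \<Inter>{I. S \<subseteq> I \<and> 0 \<in> I \<and> (\<forall>x\<in>I. \<forall>y\<in>I. x + y \<in> I)
                            \<and> (\<forall>r. \<forall>x\<in>I. r * x \<in> I)}"

end

(* Each atom form is the generator for the empty nested set and B = H, so one inclusion is
   immediate.  Conversely, let A be the join of the maximal elements A_j of a nested set and
   write B = A \<or> H_1 \<or> ... \<or> H_d with atoms H_i.  The atom form of H_i is the sum over all
   G \<ge> B plus the sum t_i over the G \<ge> H_i not above B, so modulo the ideal the generator is
   \<plusminus> x_A_1 ... x_A_k t_1 ... t_d.  Every monomial of this product comes from a set
   {A_j} \<union> {G_i} whose join lies above B although none of its members does; by the product
   decomposition of building sets such a set cannot be nested. *)

theory Submission
  imports Defs "HOL.Modules" "HOL-Library.FuncSet"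
begin

lemma ideal_generated_eq_span: "module.span (*) = (ideal_generated :: 'a::comm_ring_1 set \<Rightarrow> _)"
proof -
  interpret module "(*) :: 'a \<Rightarrow> 'a \<Rightarrow> 'a"
    by unfold_locales (simp_all add: algebra_simps)
  show ?thesis
    unfolding span_def hull_def subspace_def ideal_generated_def by (auto simp: fun_eq_iff)
qed

global_interpretation ideal_generated: module "(*) :: 'a::comm_ring_1 \<Rightarrow> 'a \<Rightarrow> 'a"
  rewrites "module.span (*) = (ideal_generated :: 'a set \<Rightarrow> _)"
  by unfold_locales (simp_all add: algebra_simps ideal_generated_eq_span)

lemma ideal_generated_dvd:
  assumes "x \<in> ideal_generated S" and "x dvd y"
  shows "y \<in> ideal_generated S"
proof -
  from \<open>x dvd y\<close> obtain k where "y = k * x" by (metis dvdE mult.commute)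
  with assms(1) show ?thesis by (simp add: ideal_generated.span_scale)
qed

lemma ideal_generated_Un_eqI:
  assumes "L \<subseteq> ideal_generated (N \<union> R)" and "R \<subseteq> ideal_generated (N \<union> L)"
  shows "ideal_generated (N \<union> L) = ideal_generated (N \<union> R)"
  using assms ideal_generated.span_superset[of N] ideal_generated.span_mono[of N]
  unfolding ideal_generated.span_eq by blast

lemma prod_diff_in_ideal_generated:
  assumes "\<And>x. x \<in> K \<Longrightarrow> f x - g x \<in> ideal_generated S"
  shows "prod f K - prod g K \<in> ideal_generated S"
  using assms
proof (induction K rule: infinite_finite_induct)
  case (insert x K)
  have "prod f (insert x K) - prod g (insert x K)
      = f x * (prod f K - prod g K) + prod g K * (f x - g x)"
    using insert.hyps by (simp add: algebra_simps)
  then show ?case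
    using insert.IH insert.prems
    by (simp add: ideal_generated.span_add ideal_generated.span_scale)
qed (simp_all add: ideal_generated.span_zero)

lemma prod_image_dvd_prod:
  fixes g :: "'b \<Rightarrow> 'c::comm_monoid_mult"
  shows "finite K \<Longrightarrow> (\<Prod>y\<in>f ` K. g y) dvd (\<Prod>x\<in>K. g (f x))"
proof (induction K rule: finite_induct)
  case (insert x K)
  then show ?case
    by (cases "f x \<in> f ` K") (auto simp: insert_absorb dvd_mult mult_dvd_mono)
qed simp

lemma prod_union_dvd_prod_mult:
  fixes g :: "'b \<Rightarrow> 'c::comm_monoid_mult"
  assumes "finite A" and "finite B"
  shows "(\<Prod>x\<in>A \<union> B. g x) dvd (\<Prod>x\<in>A. g x) * (\<Prod>x\<in>B. g x)"
  using prod.union_inter[OF assms, of g] by (metis dvd_triv_left)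

lemma exists_maximal_above:
  fixes T :: "'a::order set"
  assumes "finite T" and "t \<in> T"
  shows "\<exists>m\<in>maximals T. t \<le> m"
  using finite_has_maximal2[OF assms] unfolding maximals_def by (auto simp: less_le)

lemma maximals_antichain: "x \<in> maximals T \<Longrightarrow> y \<in> maximals T \<Longrightarrow> x \<le> y \<Longrightarrow> x = y"
  unfolding maximals_def by (auto simp: less_le)

lemma maximals_empty [simp]: "maximals {} = {}"
  unfolding maximals_def by simp

lemma Sup_maximals:
  fixes T :: "'a::complete_lattice set"
  assumes "finite T"
  shows "Sup (maximals T) = Sup T"
proof (rule order.antisym)
  show "Sup (maximals T) \<le> Sup T"
    by (rule Sup_subset_mono) (auto simp: maximals_def)
  show "Sup T \<le> Sup (maximals T)"
    using exists_maximal_above[OF assms] by (meson Sup_least Sup_upper order.trans)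
qed

text \<open>The maximal elements of \<open>T\<close> form an antichain in \<open>S\<close> with the same join.\<close>
lemma nested_Sup_mem:
  assumes "nested \<G> S" and "T \<subseteq> S" and "T \<noteq> {}" and "Sup T \<in> \<G>"
  shows "Sup T \<in> T"
proof -
  have "finite T" by simp
  have max_T: "maximals T \<subseteq> T"
    by (auto simp: maximals_def)
  obtain m where m: "m \<in> maximals T"
    using \<open>T \<noteq> {}\<close> exists_maximal_above[OF \<open>finite T\<close>] by blast
  have "\<not> 2 \<le> card (maximals T)"
  proof
    assume "2 \<le> card (maximals T)"
    moreover have "maximals T \<subseteq> S"
      using max_T \<open>T \<subseteq> S\<close> by blast
    ultimately have "Sup (maximals T) \<notin> \<G>"
      using \<open>nested \<G> S\<close> maximals_antichain unfolding nested_def by blast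
    then show False
      using \<open>Sup T \<in> \<G>\<close> Sup_maximals[OF \<open>finite T\<close>] by simp
  qed
  then have "maximals T = {m}"
    using m card_le_Suc0_iff_eq[of "maximals T"] by auto
  then show ?thesis
    using m max_T Sup_maximals[OF \<open>finite T\<close>] by auto
qed

locale interval_decomposition =
  fixes M :: "'a::{finite,complete_lattice} set" and X :: 'a and \<phi> :: "('a \<Rightarrow> 'a) \<Rightarrow> 'a"
  assumes bij: "bij_betw \<phi> (interval_product M) {Z. Z \<le> X}"
    and le_iff: "f \<in> interval_product M \<Longrightarrow> g \<in> interval_product M \<Longrightarrow>
        \<phi> f \<le> \<phi> g \<longleftrightarrow> (\<forall>G\<in>M. f G \<le> g G)"
    and unit: "G \<in> M \<Longrightarrow> \<phi> (\<lambda>H. if H = G then G else bot) = G"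
begin

definition coord :: "'a \<Rightarrow> 'a \<Rightarrow> 'a"
  where "coord = inv_into (interval_product M) \<phi>"

lemma coord_mem: "Z \<le> X \<Longrightarrow> coord Z \<in> interval_product M"
  unfolding coord_def using bij by (metis bij_betw_imp_surj_on inv_into_into mem_Collect_eq)

lemma phi_coord: "Z \<le> X \<Longrightarrow> \<phi> (coord Z) = Z"
  unfolding coord_def using bij by (metis bij_betw_imp_surj_on f_inv_into_f mem_Collect_eq)

lemma phi_le: "f \<in> interval_product M \<Longrightarrow> \<phi> f \<le> X"
  using bij by (auto dest: bij_betw_apply)

lemma coord_le: "Z \<le> X \<Longrightarrow> G \<in> M \<Longrightarrow> coord Z G \<le> G"
  using coord_mem unfolding interval_product_def by blast

lemma le_iff_coord:
  "Z \<le> X \<Longrightarrow> Z' \<le> X \<Longrightarrow> Z \<le> Z' \<longleftrightarrow> (\<forall>G\<in>M. coord Z G \<le> coord Z' G)"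
  using le_iff[OF coord_mem coord_mem] by (simp add: phi_coord)

lemma axis_mem: "G \<in> M \<Longrightarrow> (\<lambda>H. if H = G then G else bot) \<in> interval_product M"
  unfolding interval_product_def by auto

lemma factor_le: "G \<in> M \<Longrightarrow> G \<le> X"
  using phi_le[OF axis_mem] unit by metis

lemma coord_factor: "G \<in> M \<Longrightarrow> coord G = (\<lambda>H. if H = G then G else bot)"
  unfolding coord_def using bij axis_mem unit
  by (metis bij_betw_imp_inj_on inv_into_f_f)

lemma coord_top:
  assumes "G \<in> M"
  shows "coord X G = G"
proof -
  define c where "c = (\<lambda>H. if H \<in> M then H else (bot::'a))"
  have "c \<in> interval_product M"
    unfolding c_def interval_product_def by auto
  then have "\<forall>G\<in>M. c G \<le> coord X G"
    using le_iff[OF _ coord_mem] phi_le phi_coord by simp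
  then show ?thesis
    using assms coord_le[OF order_refl] unfolding c_def by (metis order.antisym)
qed

lemma coord_eq_bot:
  assumes "F \<in> M" and "F' \<in> M" and "F \<noteq> F'" and "Z \<le> F'"
  shows "coord Z F = bot"
proof -
  have "Z \<le> X"
    using assms(2,4) factor_le by (blast intro: order.trans)
  then have "coord Z F \<le> coord F' F"
    using le_iff_coord[of Z F'] assms factor_le by blast
  then show ?thesis
    using assms(1-3) coord_factor by (simp add: bot_unique)
qed

lemma empty_factors_imp_bot: "M = {} \<Longrightarrow> X = bot"
proof -
  assume "M = {}"
  then have "interval_product M = {\<lambda>_. bot}"
    unfolding interval_product_def by auto
  then have "coord X = coord bot"
    using coord_mem[of X] coord_mem[of bot] by simp
  then show "X = bot"
    using phi_coord[of X] phi_coord[of bot] by simp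
qed

text \<open>The witness \<open>v\<close> agrees with the coordinates of \<open>Y\<close> at the factor \<open>F\<close> and is
maximal elsewhere.  It dominates every element of \<open>S\<close>, hence \<open>X\<close>, which forces the
\<open>F\<close>-coordinate of \<open>Y\<close> to be full.\<close>
lemma Sup_below_factor:
  assumes X: "Sup S = X" and S: "\<forall>s\<in>S. \<exists>F'\<in>M. s \<le> F'" and F: "F \<in> M"
  shows "Sup {s \<in> S. s \<le> F} = F"
proof -
  define Y where "Y = Sup {s \<in> S. s \<le> F}"
  have "Y \<le> F"
    unfolding Y_def by (auto intro: Sup_least)
  then have YX: "Y \<le> X"
    using factor_le[OF F] by (rule order.trans)
  define v where "v = (\<lambda>G. if G \<in> M then G else bot)(F := coord Y F)"
  have v: "v \<in> interval_product M"
    using coord_le[OF YX F] F unfolding v_def interval_product_def by auto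
  have "s \<le> \<phi> v" if s: "s \<in> S" for s
  proof -
    have sX: "s \<le> X"
      using s X by (auto intro: Sup_upper)
    have "coord s G \<le> v G" if G: "G \<in> M" for G
    proof (cases "G = F")
      case False
      then show ?thesis
        using coord_le[OF sX G] G unfolding v_def by simp
    next
      case True
      show ?thesis
      proof (cases "s \<le> F")
        case True
        then have "s \<le> Y"
          unfolding Y_def using s by (auto intro: Sup_upper)
        then show ?thesis
          using le_iff_coord[OF sX YX] F \<open>G = F\<close> unfolding v_def by simp
      next
        case False
        then obtain F' where "F' \<in> M" "s \<le> F'" "F' \<noteq> F"
          using S s by blast
        then show ?thesis
          using coord_eq_bot[OF F] \<open>G = F\<close> by simp
      qed
    qed
    then show ?thesis
      using le_iff[OF coord_mem[OF sX] v] phi_coord[OF sX] by simp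
  qed
  then have "\<phi> (coord X) \<le> \<phi> v"
    using X phi_coord[OF order_refl] by (auto intro: Sup_least)
  then have "coord X F \<le> v F"
    using le_iff[OF coord_mem[OF order_refl] v] F by blast
  then have "F \<le> coord Y F"
    using coord_top[OF F] unfolding v_def by simp
  then have "F \<le> Y"
    using le_iff_coord[OF factor_le[OF F] YX] coord_factor[OF F] by simp
  with \<open>Y \<le> F\<close> show ?thesis
    unfolding Y_def by simp
qed

end

lemma building_set_interval_decomposition:
  assumes "building_set \<G>" and "X \<noteq> bot"
  obtains \<phi> where "interval_decomposition (maximals {G \<in> \<G>. G \<le> X}) X \<phi>"
proof -
  have "\<exists>\<phi>. interval_decomposition (maximals {G \<in> \<G>. G \<le> X}) X \<phi>"
    using conjunct2[OF assms(1)[unfolded building_set_def Let_def], rule_format, OF assms(2)]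
    unfolding interval_decomposition_def by (simp only: Ball_def all_simps)
  with that show thesis
    by blast
qed

lemma building_set_nonbot:
  assumes "building_set \<G>" and "G \<in> \<G>"
  shows "G \<noteq> bot"
  using assms(2) conjunct1[OF assms(1)[unfolded building_set_def]] by blast

lemma atoms_in_building_set:
  assumes "building_set \<G>" and H: "H \<in> atoms"
  shows "H \<in> \<G>"
proof (rule ccontr)
  assume "H \<notin> \<G>"
  have "bot < H"
    using H unfolding atoms_def by simp
  have "G = H" if "G \<in> \<G>" "G \<le> H" for G
    using H building_set_nonbot[OF assms(1) \<open>G \<in> \<G>\<close>] \<open>G \<le> H\<close>
    unfolding atoms_def by (simp add: bot_less)
  then have "maximals {G \<in> \<G>. G \<le> H} = {}"
    using \<open>H \<notin> \<G>\<close> unfolding maximals_def by blast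
  moreover obtain \<phi> where "interval_decomposition (maximals {G \<in> \<G>. G \<le> H}) H \<phi>"
    using building_set_interval_decomposition[OF assms(1), of H] \<open>bot < H\<close> by auto
  ultimately have "H = bot"
    using interval_decomposition.empty_factors_imp_bot by metis
  with \<open>bot < H\<close> show False
    by simp
qed

lemma nested_Sup_above:
  assumes \<G>: "building_set \<G>" and S: "nested \<G> S" and B: "B \<in> \<G>" "B \<le> Sup S"
  shows "\<exists>s\<in>S. B \<le> s"
proof -
  define M where "M = maximals {G \<in> \<G>. G \<le> Sup S}"
  have "S \<subseteq> \<G>"
    using S unfolding nested_def by simp
  have below_M: "\<exists>F\<in>M. G \<le> F" if "G \<in> \<G>" "G \<le> Sup S" for G
    unfolding M_def using that by (intro exists_maximal_above) auto
  have "Sup S \<noteq> bot"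
    using B building_set_nonbot[OF \<G>] by (metis bot_unique)
  then obtain \<phi> where dec: "interval_decomposition M (Sup S) \<phi>"
    unfolding M_def by (rule building_set_interval_decomposition[OF \<G>])
  obtain F where F: "F \<in> M" "B \<le> F"
    using below_M B by blast
  have "Sup {s \<in> S. s \<le> F} = F"
    using \<open>S \<subseteq> \<G>\<close> below_M
    by (intro interval_decomposition.Sup_below_factor[OF dec refl _ F(1)]) (auto intro: Sup_upper)
  moreover have "F \<in> \<G>"
    using F unfolding M_def maximals_def by simp
  moreover have "{s \<in> S. s \<le> F} \<noteq> {}"
    using calculation building_set_nonbot[OF \<G>] by (metis Sup_empty)
  ultimately have "F \<in> {s \<in> S. s \<le> F}"
    using nested_Sup_mem[OF S, of "{s \<in> S. s \<le> F}"] by simp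
  with F show ?thesis
    by blast
qed

abbreviation upper_var_sum :: "'a::order set \<Rightarrow> 'a \<Rightarrow> 'a zpoly"
  where "upper_var_sum \<G> X \<equiv> \<Sum>G\<in>{G \<in> \<G>. X \<le> G}. var G"

abbreviation non_nested_monomials :: "'a::{finite,complete_lattice} set \<Rightarrow> 'a zpoly set"
  where "non_nested_monomials \<G> \<equiv> {(\<Prod>G\<in>S. var G) | S. S \<subseteq> \<G> \<and> \<not> nested \<G> S}"

abbreviation atom_forms :: "'a::{finite,complete_lattice} set \<Rightarrow> 'a zpoly set"
  where "atom_forms \<G> \<equiv> {upper_var_sum \<G> H | H. H \<in> atoms}"

abbreviation nested_generators :: "'a::{finite,complete_lattice} set \<Rightarrow> 'a zpoly set"
  where "nested_generators \<G> \<equiv>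
    {(\<Prod>A\<in>maximals \<H>. var A) * upper_var_sum \<G> B ^ dist_atoms (Sup (maximals \<H>)) B
      | \<H> B. nested \<G> \<H> \<and> B \<in> \<G> \<and> Sup (maximals \<H>) < B}"

lemma upper_var_sum_split:
  fixes \<G> :: "'a::{finite,order} set"
  assumes "h \<le> B"
  shows "upper_var_sum \<G> h = upper_var_sum \<G> B + (\<Sum>G\<in>{G \<in> \<G>. h \<le> G \<and> \<not> B \<le> G}. var G)"
proof -
  have "{G \<in> \<G>. h \<le> G} = {G \<in> \<G>. B \<le> G} \<union> {G \<in> \<G>. h \<le> G \<and> \<not> B \<le> G}"
    using assms by (auto intro: order.trans)
  then show ?thesis
    by (simp add: sum.union_disjoint disjoint_iff)
qed

text \<open>Expanding the product, every monomial is divisible by the monomial of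
\<open>P \<union> f ` Hs\<close> for a choice \<open>f h \<ge> h\<close> avoiding the cone over \<open>B\<close>; that set is
not nested, since \<open>B\<close> lies below its join but below none of its members.\<close>
lemma monomial_mult_prod_avoiding_in_ideal:
  fixes \<G> :: "'a::{finite,complete_lattice} set"
  assumes \<G>: "building_set \<G>" and P: "P \<subseteq> \<G>" and B: "B \<in> \<G>" "\<not> B \<le> Sup P"
    and B_le: "B \<le> sup (Sup P) (Sup Hs)"
  shows "(\<Prod>A\<in>P. var A) * (\<Prod>h\<in>Hs. \<Sum>G\<in>{G \<in> \<G>. h \<le> G \<and> \<not> B \<le> G}. var G)
           \<in> ideal_generated (non_nested_monomials \<G>)"
proof -
  define C where "C h = {G \<in> \<G>. h \<le> G \<and> \<not> B \<le> G}" for h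
  have "(\<Prod>A\<in>P. var A) * (\<Prod>h\<in>Hs. \<Sum>G\<in>C h. var G)
      = (\<Sum>f\<in>Pi\<^sub>E Hs C. (\<Prod>A\<in>P. var A) * (\<Prod>h\<in>Hs. var (f h)))"
    by (simp add: prod_sum_PiE sum_distrib_left)
  also have "\<dots> \<in> ideal_generated (non_nested_monomials \<G>)"
  proof (rule ideal_generated.span_sum)
    fix f assume f: "f \<in> Pi\<^sub>E Hs C"
    define S where "S = P \<union> f ` Hs"
    have "S \<subseteq> \<G>"
      using P f unfolding S_def C_def by auto
    have "\<not> nested \<G> S"
    proof
      assume "nested \<G> S"
      have "Sup Hs \<le> Sup S"
      proof (rule Sup_least)
        fix h assume "h \<in> Hs"
        then have "h \<le> f h" and "f h \<in> S"
          using f unfolding C_def S_def by auto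
        then show "h \<le> Sup S"
          by (auto intro: Sup_upper2)
      qed
      moreover have "Sup P \<le> Sup S"
        unfolding S_def by (simp add: Sup_subset_mono)
      ultimately obtain s where "s \<in> S" "B \<le> s"
        using nested_Sup_above[OF \<G> \<open>nested \<G> S\<close> B(1)] B_le by (meson le_sup_iff order.trans)
      then show False
        using B(2) f unfolding S_def C_def by (auto intro: Sup_upper2)
    qed
    then have "(\<Prod>G\<in>S. var G) \<in> ideal_generated (non_nested_monomials \<G>)"
      using \<open>S \<subseteq> \<G>\<close> by (intro ideal_generated.span_base) blast
    moreover have "(\<Prod>G\<in>S. var G) dvd (\<Prod>A\<in>P. var A) * (\<Prod>h\<in>Hs. var (f h))"
      unfolding S_def
      by (rule dvd_trans[OF prod_union_dvd_prod_mult])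
        (auto intro!: mult_dvd_mono prod_image_dvd_prod)
    ultimately show "(\<Prod>A\<in>P. var A) * (\<Prod>h\<in>Hs. var (f h))
        \<in> ideal_generated (non_nested_monomials \<G>)"
      by (rule ideal_generated_dvd)
  qed
  finally show ?thesis
    unfolding C_def .
qed

lemma dist_atoms_witness:
  fixes X Y :: "'a::{finite,complete_lattice}"
  assumes "atomic_lattice TYPE('a)" and "X \<le> Y"
  obtains Hs where "Hs \<subseteq> atoms" "card Hs = dist_atoms X Y" "Y = sup X (Sup Hs)"
proof -
  define A where "A = {H \<in> atoms. H \<le> Y}"
  have "Y = Sup A"
    using assms(1) unfolding atomic_lattice_def A_def by (rule spec)
  with assms(2) have "Y = sup X (Sup A)"
    by (simp add: sup.absorb2)
  moreover have "A \<subseteq> atoms"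
    unfolding A_def by blast
  ultimately have "\<exists>d Hs. Hs \<subseteq> atoms \<and> card Hs = d \<and> Y = sup X (Sup Hs)"
    by blast
  then have "\<exists>Hs. Hs \<subseteq> atoms \<and> card Hs = dist_atoms X Y \<and> Y = sup X (Sup Hs)"
    unfolding dist_atoms_def by (rule LeastI_ex)
  with that show ?thesis
    by blast
qed

lemma dist_atoms_bot_atom:
  assumes "H \<in> atoms"
  shows "dist_atoms bot H = 1"
  unfolding dist_atoms_def
proof (rule Least_equality)
  show "\<exists>Hs. Hs \<subseteq> atoms \<and> card Hs = 1 \<and> H = sup bot (Sup Hs)"
    using assms by (intro exI[of _ "{H}"]) simp
  show "1 \<le> d" if "\<exists>Hs. Hs \<subseteq> atoms \<and> card Hs = d \<and> H = sup bot (Sup Hs)" for d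
  proof -
    from that obtain Hs where "card Hs = d" and "H = Sup Hs"
      by auto
    moreover have "H \<noteq> bot"
      using assms by (auto simp: atoms_def)
    ultimately have "Hs \<noteq> {}"
      by auto
    then have "0 < card Hs"
      by (simp add: card_gt_0_iff)
    with \<open>card Hs = d\<close> show ?thesis
      by simp
  qed
qed

text \<open>Modulo the atom forms, \<open>upper_var_sum \<G> B\<close> is congruent to \<open>- \<tau> h\<close> for each of the
\<open>d\<close> atoms \<open>h\<close> completing \<open>Sup P\<close> to \<open>B\<close>, where \<open>\<tau> h\<close> sums the \<open>G \<ge> h\<close> not above \<open>B\<close>.\<close>
lemma monomial_mult_upper_var_sum_power_in_ideal:
  fixes \<G> :: "'a::{finite,complete_lattice} set"
  assumes atomic: "atomic_lattice TYPE('a)" and \<G>: "building_set \<G>"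
    and P: "P \<subseteq> \<G>" and B: "B \<in> \<G>" "Sup P < B"
  shows "(\<Prod>A\<in>P. var A) * upper_var_sum \<G> B ^ dist_atoms (Sup P) B
           \<in> ideal_generated (non_nested_monomials \<G> \<union> atom_forms \<G>)"
    (is "?m * ?\<sigma> ^ _ \<in> ?I")
proof -
  obtain Hs where Hs: "Hs \<subseteq> atoms" "card Hs = dist_atoms (Sup P) B" "B = sup (Sup P) (Sup Hs)"
    using dist_atoms_witness[OF atomic] B(2) by (metis less_imp_le)
  define \<tau> where "\<tau> h = (\<Sum>G\<in>{G \<in> \<G>. h \<le> G \<and> \<not> B \<le> G}. var G)" for h
  have "?\<sigma> - (- \<tau> h) \<in> ?I" if "h \<in> Hs" for h
  proof -
    have "h \<le> B"
      using that Hs(3) by (simp add: Sup_upper le_supI2)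
    then have "?\<sigma> - (- \<tau> h) = upper_var_sum \<G> h"
      unfolding \<tau>_def by (simp add: upper_var_sum_split)
    then show ?thesis
      using that Hs(1) by (auto intro: ideal_generated.span_base)
  qed
  then have "?m * ((\<Prod>h\<in>Hs. ?\<sigma>) - (\<Prod>h\<in>Hs. - \<tau> h)) \<in> ?I"
    by (intro ideal_generated.span_scale prod_diff_in_ideal_generated)
  moreover have "?m * (\<Prod>h\<in>Hs. - \<tau> h) \<in> ?I"
  proof -
    have "?m * (\<Prod>h\<in>Hs. \<tau> h) \<in> ?I"
      using monomial_mult_prod_avoiding_in_ideal[OF \<G> P B(1), of Hs] B Hs(3)
        ideal_generated.span_mono[of "non_nested_monomials \<G>" "non_nested_monomials \<G> \<union> atom_forms \<G>"]
      unfolding \<tau>_def by (auto simp: less_le_not_le)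
    moreover have "?m * (\<Prod>h\<in>Hs. - \<tau> h) = (-1) ^ card Hs * (?m * (\<Prod>h\<in>Hs. \<tau> h))"
      by (simp add: prod_uminus)
    ultimately show ?thesis
      by (simp only: ideal_generated.span_scale)
  qed
  ultimately have "?m * ((\<Prod>h\<in>Hs. ?\<sigma>) - (\<Prod>h\<in>Hs. - \<tau> h)) + ?m * (\<Prod>h\<in>Hs. - \<tau> h) \<in> ?I"
    by (rule ideal_generated.span_add)
  then have "?m * (\<Prod>h\<in>Hs. ?\<sigma>) \<in> ?I"
    by (simp add: algebra_simps)
  with Hs(2) show ?thesis
    by simp
qed

lemma atom_forms_subset_nested_generators:
  assumes "building_set \<G>"
  shows "atom_forms \<G> \<subseteq> nested_generators \<G>"
proof
  fix x assume "x \<in> atom_forms \<G>"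
  then obtain H where x: "x = upper_var_sum \<G> H" and H: "H \<in> atoms"
    by blast
  have "x = (\<Prod>A\<in>maximals {}. var A) * upper_var_sum \<G> H ^ dist_atoms (Sup (maximals {})) H"
    by (simp add: x dist_atoms_bot_atom[OF H])
  moreover have "nested \<G> {}" and "Sup (maximals {}) < H"
    using H by (auto simp: atoms_def nested_def)
  ultimately show "x \<in> nested_generators \<G>"
    using atoms_in_building_set[OF assms H] by blast
qed

lemma nested_generators_subset_ideal:
  assumes "atomic_lattice TYPE('a)" and "building_set (\<G> :: 'a::{finite,complete_lattice} set)"
  shows "nested_generators \<G> \<subseteq> ideal_generated (non_nested_monomials \<G> \<union> atom_forms \<G>)"
proof
  fix x assume "x \<in> nested_generators \<G>"
  then obtain \<H> B
    where x: "x = (\<Prod>A\<in>maximals \<H>. var A) * upper_var_sum \<G> B ^ dist_atoms (Sup (maximals \<H>)) B"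
      and "nested \<G> \<H>" and B: "B \<in> \<G>" "Sup (maximals \<H>) < B"
    by blast
  then have "maximals \<H> \<subseteq> \<G>"
    unfolding nested_def maximals_def by blast
  then show "x \<in> ideal_generated (non_nested_monomials \<G> \<union> atom_forms \<G>)"
    unfolding x by (rule monomial_mult_upper_var_sum_power_in_ideal[OF assms _ B])
qed

theorem theorem3p2:
  fixes \<G> :: "'a::{finite,complete_lattice} set"
  assumes "atomic_lattice TYPE('a)"
    and "building_set \<G>"
  shows "ideal_generated
           ({(\<Prod>G\<in>S. var G) | S. S \<subseteq> \<G> \<and> \<not> nested \<G> S}
            \<union> {(\<Sum>G\<in>{G \<in> \<G>. H \<le> G}. var G) | H. H \<in> atoms})
       = ideal_generated
           ({(\<Prod>G\<in>S. var G) | S. S \<subseteq> \<G> \<and> \<not> nested \<G> S}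
            \<union> {(\<Prod>A\<in>maximals \<H>. var A) * (\<Sum>G\<in>{G \<in> \<G>. B \<le> G}. var G) ^ dist_atoms (Sup (maximals \<H>)) B
                 | \<H> B. nested \<G> \<H> \<and> B \<in> \<G> \<and> Sup (maximals \<H>) < B})"
proof (rule ideal_generated_Un_eqI)
  show "atom_forms \<G> \<subseteq> ideal_generated (non_nested_monomials \<G> \<union> nested_generators \<G>)"
    using le_supI2[OF atom_forms_subset_nested_generators[OF assms(2)]]
      ideal_generated.span_superset
    by (rule order.trans)
  show "nested_generators \<G> \<subseteq> ideal_generated (non_nested_monomials \<G> \<union> atom_forms \<G>)"
    using nested_generators_subset_ideal[OF assms] .
qed

end
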